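(* Let $\mathbf{F}$ be a field of characteristic $0$, $\Lambda\in\mathbf{Z}_{\ge 1}$, and let $\mathcal{M}$ be a finite dimensional $2$-irreducible triangular module over the Lie algebra $s\ell_2^{\Lambda}$ (with respect to the Levi factor $s\ell_2=\mathbf{F}f\oplus\mathbf{F}h\oplus\mathbf{F}e$). If $rad(s\ell_2^{\Lambda})\cdot\mathcal{M}\neq\{0\}$, then $\mathcal{M}$ is isomorphic to $\mathcal{M}_{m,n}^{s,N}(a_1,\dots,a_{n-s})$ for some scalars $a_1,\dots,a_{n-s}\in\mathbf{F}$ and some nonnegative integers $m,n,s,N$ satisfying $$m+2s=\Lambda+n+2N,\qquad n\ge s\ge 0,\qquad m\ge N\ge 0.$$
   Context: The Lie algebra $s\ell_2^{\Lambda}$ has basis $f,h,e,z_0,\dots,z_\Lambda$ with brackets $[h,e]=2e$, $[h,f]=-2f$, $[e,f]=h$, $[z_j,z_{j'}]=0$, $[h,z_j]=(\Lambda-2j)z_j$, $[f,z_j]=z_{j+1}$, $[e,z_j]=j(\Lambda-j+1)z_{j-1}$ for $0\le j,j'\le\Lambda$, where $z_j:=0$ for $j\notin\{0,\dots,\Lambda\}$. Its radical (which is also its nil radical) is $rad(s\ell_2^{\Lambda})=\mathbf{F}z_0\oplus\cdots\oplus\mathbf{F}z_\Lambda$, and $s\ell_2=\mathbf{F}f\oplus\mathbf{F}h\oplus\mathbf{F}e$ is a Levi factor. A finite dimensional graded vector space $V=\bigoplus_{k\ge 0}V_k$ has $V_k=\{0\}$ for large $k$. A triangular linear transformation of $V$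 is a linear map $g$ with $g(\bigoplus_{k\ge j}V_k)\subseteq\bigoplus_{k\ge j}V_k$ for all $j\ge0$; these form the Lie algebra $g\ell^{\bigtriangleup}(V)$, and $g\ell^{\bigtriangleup}_j(V)=\{g\in g\ell^{\bigtriangleup}(V): g(V_k)\subseteq V_{k+j}\ \forall k\}$. A triangular $\mathcal{L}$-module (with respect to a Levi factor $\mathcal{L}_{semi}$) is a graded vector space $V$ with a Lie homomorphism $\varphi:\mathcal{L}\to g\ell^{\bigtriangleup}(V)$ such that $\varphi(\mathcal{L}_{semi})\subseteq g\ell^{\bigtriangleup}_0(V)$ and $\varphi(nil\,\mathcal{L})\subseteq\bigoplus_{j\ge1}g\ell^{\bigtriangleup}_j(V)$, where $nil\,\mathcal{L}$ is the largest nilpotent ideal. Such a module $V=\bigoplus_{k=0}^{n}V_k$ is $(n+1)$-irreducible if each $V_k$ ($0\le k\le n$) is an irreducible $\mathcal{L}_{semi}$-module; in particular $2$-irreducible means $V=V_0\oplus V_1$ with $V_0,V_1$ irreducible $\mathcal{L}_{semi}$-modules. For nonnegative integers $m,n,s,N$ with $m+2s=\Lambda+n+2N$, $n\ge s\ge0$, $m\ge N\ge0$, and scalars $a_1,\dots,a_{n-s}\in\mathbf{F}$ (set $a_0:=1$), the module $\mathcal{M}_{m,n}^{s,N}(a_1,\dots,a_{n-s})$ is the graded space $V_0\oplus V_1$ with $V_0=\bigoplus_{i=0}^n\mathbf{F}u_i$, $V_1=\bigoplus_{k=0}^m\mathbf{F}w_k$ (with $u_i:=0$ for $i\notin\{0,\dots,n\}$,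 $w_k:=0$ for $k\notin\{0,\dots,m\}$) and action: $h\cdot u_i=(n-2i)u_i$, $f\cdot u_i=u_{i+1}$, $e\cdot u_i=i(n-i+1)u_{i-1}$ for $0\le i\le n$; $h\cdot w_k=(m-2k)w_k$, $f\cdot w_k=w_{k+1}$, $e\cdot w_k=k(m-k+1)w_{k-1}$ for $0\le k\le m$; $z_j\cdot w_k=0$ for all $0\le j\le\Lambda$, $0\le k\le m$; $z_j\cdot u_i=0$ for $0\le j\le\Lambda$, $0\le i\le n$ with $i+j\le s-1$; for $0\le j\le\min\{s+\theta,\Lambda\}$ and $0\le\theta\le n-s$: $$z_j\cdot u_{s-j+\theta}=\Big(\sum_{k=0}^{\theta}(-1)^{j-k}\binom{j}{k}\frac{(m-N-\theta+k)!}{(N+\theta-k)!\,m!}\,a_{\theta-k}\Big)w_{\theta+N};$$ for $\Lambda\ge j\ge\theta\ge1$: $$z_j\cdot u_{n-j+\theta}=\Big(\sum_{k=0}^{j-\theta}(-1)^{j-\theta-k}\binom{j}{\theta+k}\frac{(m-N-n+s+k)!}{(N+n-s-k)!\,m!}\,a_{n-s-k}\Big)w_{n-s+\theta+N};$$ here $\binom{j}{k}=\frac{j!}{k!(j-k)!}$ for $j\ge k$ and $\binom{j}{k}=0$ for $k>j$. This is a $2$-irreducible triangular $s\ell_2^{\Lambda}$-module. *)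

theory Defs
  imports Complex_Main
begin

text \<open>
  The Lie algebra sl2^L (L = Lambda) has basis f,h,e,z_0,...,z_L.  A representation
  phi : sl2^L -> gl(V) is a linear map; it is a Lie homomorphism iff the images of the
  basis elements satisfy the defining bracket relations (with [X,Y] = XY - YX).
  We therefore describe a representation by the images F = phi(f), H = phi(h),
  E = phi(e) and Z j = phi(z_j) (0 <= j <= L), linear maps of the F-vector space V
  (the carrier is the whole type 'v, with scalar multiplication scale).
  Convention: z_j := 0 for j outside {0..L}.
\<close>

definition zext :: "nat \<Rightarrow> (nat \<Rightarrow> 'v \<Rightarrow> 'v::ab_group_add) \<Rightarrow> nat \<Rightarrow> 'v \<Rightarrow> 'v" where
  "zext L Z j = (if j \<le> L then Z j else (\<lambda>_. 0))"

definition sl2L_rep ::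
  "('a::field \<Rightarrow> 'v::ab_group_add \<Rightarrow> 'v) \<Rightarrow> nat \<Rightarrow> ('v \<Rightarrow> 'v) \<Rightarrow> ('v \<Rightarrow> 'v) \<Rightarrow> ('v \<Rightarrow> 'v)
    \<Rightarrow> (nat \<Rightarrow> 'v \<Rightarrow> 'v) \<Rightarrow> bool" where
  "sl2L_rep scale L F H E Z \<longleftrightarrow>
     vector_space scale \<and>
     Vector_Spaces.linear scale scale F \<and> Vector_Spaces.linear scale scale H \<and>
     Vector_Spaces.linear scale scale E \<and> (\<forall>j\<le>L. Vector_Spaces.linear scale scale (Z j)) \<and>
     (\<forall>v. H (E v) - E (H v) = scale 2 (E v)) \<and>
     (\<forall>v. H (F v) - F (H v) = scale (-2) (F v)) \<and>
     (\<forall>v. E (F v) - F (E v) = H v) \<and>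
     (\<forall>j\<le>L. \<forall>j'\<le>L. \<forall>v. Z j (Z j' v) - Z j' (Z j v) = 0) \<and>
     (\<forall>j\<le>L. \<forall>v. H (Z j v) - Z j (H v) = scale (of_int (int L - 2 * int j)) (Z j v)) \<and>
     (\<forall>j\<le>L. \<forall>v. F (Z j v) - Z j (F v) = zext L Z (j + 1) v) \<and>
     (\<forall>j\<le>L. \<forall>v. E (Z j v) - Z j (E v) =
        (if j = 0 then 0 else scale (of_nat (j * (L - j + 1))) (zext L Z (j - 1) v)))"

definition sl2_irreducible ::
  "('a::field \<Rightarrow> 'v::ab_group_add \<Rightarrow> 'v) \<Rightarrow> ('v \<Rightarrow> 'v) \<Rightarrow> ('v \<Rightarrow> 'v) \<Rightarrow> ('v \<Rightarrow> 'v) \<Rightarrow> 'v set \<Rightarrow> bool" where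
  "sl2_irreducible scale F H E W \<longleftrightarrow>
     W \<noteq> {0} \<and>
     (\<forall>U. module.subspace scale U \<and> U \<subseteq> W \<and> F ` U \<subseteq> U \<and> H ` U \<subseteq> U \<and> E ` U \<subseteq> U
          \<longrightarrow> U = {0} \<or> U = W)"

text \<open>
  A finite dimensional 2-irreducible triangular sl2^L-module V = V0 (+) V1, with respect
  to the Levi factor span(f,h,e); the nil radical is span(z_0,...,z_L).
  Triangularity: phi(sl2) lies in gl_0 (preserves each V_k), phi(nil) lies in the sum of
  gl_j for j >= 1, i.e. (as only grades 0 and 1 occur) z_j maps V0 into V1 and V1 to 0.
\<close>
definition triangular_2irr_module ::
  "('a::field \<Rightarrow> 'v::ab_group_add \<Rightarrow> 'v) \<Rightarrow> nat \<Rightarrow> ('v \<Rightarrow> 'v) \<Rightarrow> ('v \<Rightarrow> 'v) \<Rightarrow> ('v \<Rightarrow> 'v)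
    \<Rightarrow> (nat \<Rightarrow> 'v \<Rightarrow> 'v) \<Rightarrow> 'v set \<Rightarrow> 'v set \<Rightarrow> bool" where
  "triangular_2irr_module scale L F H E Z V0 V1 \<longleftrightarrow>
     sl2L_rep scale L F H E Z \<and>
     (\<exists>B. finite B \<and> module.span scale B = UNIV) \<and>
     module.subspace scale V0 \<and> module.subspace scale V1 \<and>
     V0 \<inter> V1 = {0} \<and> (\<forall>v. \<exists>x\<in>V0. \<exists>y\<in>V1. v = x + y) \<and>
     F ` V0 \<subseteq> V0 \<and> H ` V0 \<subseteq> V0 \<and> E ` V0 \<subseteq> V0 \<and>
     F ` V1 \<subseteq> V1 \<and> H ` V1 \<subseteq> V1 \<and> E ` V1 \<subseteq> V1 \<and>
     (\<forall>j\<le>L. Z j ` V0 \<subseteq> V1 \<and> Z j ` V1 \<subseteq> {0}) \<and>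
     sl2_irreducible scale F H E V0 \<and> sl2_irreducible scale F H E V1"

text \<open>Scalars a_0 := 1, a_1, ..., a_d; a_i := 0 for i > d (such indices only occur
  in terms that the paper leaves undefined, i.e. a_(negative)).\<close>
definition acoef :: "(nat \<Rightarrow> 'a::field) \<Rightarrow> nat \<Rightarrow> int \<Rightarrow> 'a" where
  "acoef a d i = (if i = 0 then 1 else if 1 \<le> i \<and> i \<le> int d then a (nat i) else 0)"

definition coef1 :: "nat \<Rightarrow> nat \<Rightarrow> nat \<Rightarrow> nat \<Rightarrow> (nat \<Rightarrow> 'a::field_char_0) \<Rightarrow> nat \<Rightarrow> nat \<Rightarrow> 'a" where
  "coef1 m n s N a j \<theta> =
     (\<Sum>k = 0..\<theta>. (-1) ^ (j - k) * of_nat (j choose k)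
        * (fact (m - N - \<theta> + k) / (fact (N + \<theta> - k) * fact m))
        * acoef a (n - s) (int \<theta> - int k))"

definition coef2 :: "nat \<Rightarrow> nat \<Rightarrow> nat \<Rightarrow> nat \<Rightarrow> (nat \<Rightarrow> 'a::field_char_0) \<Rightarrow> nat \<Rightarrow> nat \<Rightarrow> 'a" where
  "coef2 m n s N a j \<theta> =
     (\<Sum>k = 0..j - \<theta>. (-1) ^ (j - \<theta> - k) * of_nat (j choose (\<theta> + k))
        * (fact (m + s + k - N - n) / (fact (N + n - s - k) * fact m))
        * acoef a (n - s) (int n - int s - int k))"

text \<open>
  The module V is isomorphic (as a graded sl2^L-module) to M_{m,n}^{s,N}(a_1..a_(n-s))
  iff V has a basis u_0..u_n of V0 and w_0..w_m of V1 on which F,H,E,Z act by the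
  defining formulas of M_{m,n}^{s,N}(a).  (u_i := 0, w_k := 0 out of range.)
\<close>
definition is_model_basis ::
  "('a::field_char_0 \<Rightarrow> 'v::ab_group_add \<Rightarrow> 'v) \<Rightarrow> nat \<Rightarrow> ('v \<Rightarrow> 'v) \<Rightarrow> ('v \<Rightarrow> 'v) \<Rightarrow> ('v \<Rightarrow> 'v)
    \<Rightarrow> (nat \<Rightarrow> 'v \<Rightarrow> 'v) \<Rightarrow> 'v set \<Rightarrow> 'v set
    \<Rightarrow> nat \<Rightarrow> nat \<Rightarrow> nat \<Rightarrow> nat \<Rightarrow> (nat \<Rightarrow> 'a) \<Rightarrow> (nat \<Rightarrow> 'v) \<Rightarrow> (nat \<Rightarrow> 'v) \<Rightarrow> bool" where
  "is_model_basis scale L F H E Z V0 V1 m n s N a u w \<longleftrightarrow>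
     inj_on u {..n} \<and> \<not> module.dependent scale (u ` {..n}) \<and> module.span scale (u ` {..n}) = V0 \<and>
     inj_on w {..m} \<and> \<not> module.dependent scale (w ` {..m}) \<and> module.span scale (w ` {..m}) = V1 \<and>
     (\<forall>i\<le>n. H (u i) = scale (of_int (int n - 2 * int i)) (u i)) \<and>
     (\<forall>i\<le>n. F (u i) = (if i < n then u (i + 1) else 0)) \<and>
     (\<forall>i\<le>n. E (u i) = (if i = 0 then 0 else scale (of_nat (i * (n - i + 1))) (u (i - 1)))) \<and>
     (\<forall>k\<le>m. H (w k) = scale (of_int (int m - 2 * int k)) (w k)) \<and>
     (\<forall>k\<le>m. F (w k) = (if k < m then w (k + 1) else 0)) \<and>
     (\<forall>k\<le>m. E (w k) = (if k = 0 then 0 else scale (of_nat (k * (m - k + 1))) (w (k - 1)))) \<and>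
     (\<forall>j\<le>L. \<forall>k\<le>m. Z j (w k) = 0) \<and>
     (\<forall>j\<le>L. \<forall>i\<le>n. i + j < s \<longrightarrow> Z j (u i) = 0) \<and>
     (\<forall>\<theta>\<le>n - s. \<forall>j. j \<le> min (s + \<theta>) L \<longrightarrow>
        Z j (u (s + \<theta> - j)) =
          (if \<theta> + N \<le> m then scale (coef1 m n s N a j \<theta>) (w (\<theta> + N)) else 0)) \<and>
     (\<forall>j \<theta>. 1 \<le> \<theta> \<and> \<theta> \<le> j \<and> j \<le> L \<and> j \<le> n + \<theta> \<longrightarrow>
        Z j (u (n + \<theta> - j)) =
          (if n - s + \<theta> + N \<le> m then scale (coef2 m n s N a j \<theta>) (w (n - s + \<theta> + N)) else 0))"

end

theory Submission
  imports Defs "HOL-Computational_Algebra.Polynomial"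
begin

text \<open>
  The grades \<open>V0\<close> and \<open>V1\<close> are irreducible \<open>sl\<^sub>2\<close>-modules, hence have standard bases
  \<open>u\<^sub>0, \<dots>, u\<^sub>n\<close> and \<open>w\<^sub>0, \<dots>, w\<^sub>m\<close> (highest weight vectors exist because \<open>e\<close> and \<open>f\<close> act
  nilpotently, which follows from an annihilating polynomial of \<open>h\<close>).  Let \<open>s\<close> be least with
  \<open>z\<^sub>0 u\<^sub>s \<noteq> 0\<close>.  Since \<open>[e, z\<^sub>0] = 0\<close>, \<open>z\<^sub>0 u\<^sub>s\<close> is a highest weight vector of \<open>V1\<close>, so one may
  take \<open>w\<^sub>0 = z\<^sub>0 u\<^sub>s\<close>, and comparing \<open>h\<close>-weights gives \<open>m + 2s = \<Lambda> + n\<close> and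
  \<open>z\<^sub>0 u\<^sub>s\<^sub>+\<^sub>t = \<beta>\<^sub>t w\<^sub>t\<close>.  The relations \<open>z\<^sub>j\<^sub>+\<^sub>1 = [f, z\<^sub>j]\<close> then determine every \<open>z\<^sub>j u\<^sub>i\<close> by a
  Pascal-type recursion, solved by alternating binomial convolutions of \<open>\<beta>\<close>; rescaling \<open>\<beta>\<close>
  gives the parameters \<open>a\<^sub>1, \<dots>, a\<^sub>n\<^sub>-\<^sub>s\<close>.
\<close>

section \<open>Linear operators and polynomials in them\<close>

locale vector_space_ops = vector_space
begin

sublocale endo: vector_space_pair scale scale ..

abbreviation linear_endo :: "('b \<Rightarrow> 'b) \<Rightarrow> bool" where
  "linear_endo f \<equiv> Vector_Spaces.linear scale scale f"

lemma linear_endo_comp: "linear_endo f \<Longrightarrow> linear_endo g \<Longrightarrow> linear_endo (\<lambda>x. f (g x))"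
  using Vector_Spaces.linear_compose[of scale scale g scale f] by (simp add: o_def)

lemma linear_endo_funpow: "linear_endo f \<Longrightarrow> linear_endo (f ^^ k)"
  by (induction k) (simp_all add: linear_id Vector_Spaces.linear_compose)

lemma funpow_in_subspace: "subspace W \<Longrightarrow> f ` W \<subseteq> W \<Longrightarrow> x \<in> W \<Longrightarrow> (f ^^ k) x \<in> W"
  by (induction k) auto

lemma eigenvector_family_coeffs_zero:
  fixes n :: nat
  assumes T: "linear_endo T" and x: "\<And>i. i \<le> n \<Longrightarrow> x i \<noteq> 0 \<and> T (x i) = \<mu> i *s x i"
    and inj: "inj_on \<mu> {..n}"
  shows "(\<Sum>i\<le>n. c i *s x i) = 0 \<Longrightarrow> i \<le> n \<Longrightarrow> c i = 0"
  using x inj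
proof (induction n arbitrary: c i)
  case 0
  then show ?case by simp
next
  case (Suc n)
  have x': "\<And>i. i \<le> n \<Longrightarrow> x i \<noteq> 0 \<and> T (x i) = \<mu> i *s x i"
    using Suc.prems by simp
  have inj': "inj_on \<mu> {..n}"
    using Suc.prems(4) by (rule inj_on_subset) auto
  let ?m = "\<mu> (Suc n)"
  \<comment> \<open>apply \<open>T - \<mu>(n + 1)\<close> to kill the last term\<close>
  have "T (\<Sum>i\<le>Suc n. c i *s x i) - ?m *s (\<Sum>i\<le>Suc n. c i *s x i) =
        (\<Sum>i\<le>Suc n. (c i * (\<mu> i - ?m)) *s x i)"
    using Suc.prems(3)
    by (simp add: endo.linear_sum[OF T] endo.linear_scale[OF T] scale_sum_right
        sum_subtractf[symmetric] scale_left_diff_distrib scale_right_diff_distrib algebra_simps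
        del: sum.atMost_Suc)
  also have "\<dots> = (\<Sum>i\<le>n. (c i * (\<mu> i - ?m)) *s x i)"
    by simp
  finally have "(\<Sum>i\<le>n. (c i * (\<mu> i - ?m)) *s x i) = 0"
    using Suc.prems(1) by (simp add: endo.linear_0[OF T])
  then have low: "c j = 0" if "j \<le> n" for j
    using Suc.IH[OF _ that x' inj'] Suc.prems(4) that unfolding inj_on_def by force
  then have "c (Suc n) *s x (Suc n) = 0"
    using Suc.prems(1) by simp
  then have "c (Suc n) = 0"
    using Suc.prems(3)[of "Suc n"] by simp
  then show ?case
    using low Suc.prems(2) by (cases "i = Suc n") auto
qed

lemma eigenvector_family_independent:
  fixes n :: nat
  assumes T: "linear_endo T" and x: "\<And>i. i \<le> n \<Longrightarrow> x i \<noteq> 0 \<and> T (x i) = \<mu> i *s x i"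
    and inj: "inj_on \<mu> {..n}"
  shows "inj_on x {..n}" "independent (x ` {..n})"
proof -
  show injx: "inj_on x {..n}"
  proof
    fix i j assume ij: "i \<in> {..n}" "j \<in> {..n}" "x i = x j"
    then have "\<mu> i *s x i = \<mu> j *s x i" using x[of i] x[of j] by auto
    then show "i = j" using x[of i] ij inj unfolding inj_on_def by auto
  qed
  show "independent (x ` {..n})"
  proof
    assume "dependent (x ` {..n})"
    then obtain u v where v: "v \<in> x ` {..n}" and uv: "u v \<noteq> 0"
      and s: "(\<Sum>v\<in>x ` {..n}. u v *s v) = 0"
      unfolding dependent_finite[OF finite_imageI[OF finite_atMost]] by blast
    have "(\<Sum>i\<le>n. u (x i) *s x i) = 0"
      using s sum.reindex[OF injx, of "\<lambda>v. u v *s v"] by simp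
    then have "u (x i) = 0" if "i \<le> n" for i
      using eigenvector_family_coeffs_zero[OF T _ inj, where c = "\<lambda>i. u (x i)" and i = i] x that
      by blast
    then show False using v uv by auto
  qed
qed

lemma independent_family_coeffs_zero:
  fixes n :: nat
  assumes injx: "inj_on x {..n}" and ind: "independent (x ` {..n})"
    and s: "(\<Sum>i\<le>n. c i *s x i) = 0" and i: "i \<le> n"
  shows "c i = 0"
proof -
  define u where "u v = c (the_inv_into {..n} x v)" for v
  have "(\<Sum>v\<in>x ` {..n}. u v *s v) = (\<Sum>i\<le>n. u (x i) *s x i)"
    using sum.reindex[OF injx, of "\<lambda>v. u v *s v"] by simp
  also have "\<dots> = (\<Sum>i\<le>n. c i *s x i)"
    by (rule sum.cong) (auto simp: u_def the_inv_into_f_f[OF injx])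
  finally have "(\<Sum>v\<in>x ` {..n}. u v *s v) = 0" using s by simp
  then have "u (x i) = 0"
    using ind i unfolding dependent_finite[OF finite_imageI[OF finite_atMost]] by auto
  then show ?thesis using i by (simp add: u_def the_inv_into_f_f[OF injx])
qed

lemma span_family_sum:
  fixes n :: nat
  assumes injx: "inj_on x {..n}" and v: "v \<in> span (x ` {..n})"
  obtains c where "v = (\<Sum>i\<le>n. c i *s x i)"
proof -
  from v have "v \<in> range (\<lambda>u. \<Sum>w\<in>x ` {..n}. u w *s w)"
    unfolding span_finite[OF finite_imageI[OF finite_atMost]] .
  then obtain u where "v = (\<Sum>w\<in>x ` {..n}. u w *s w)"
    by blast
  then have "v = (\<Sum>i\<le>n. u (x i) *s x i)"
    using sum.reindex[OF injx, of "\<lambda>w. u w *s w"] by simp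
  then show thesis by (rule that)
qed

definition poly_op :: "'a poly \<Rightarrow> ('b \<Rightarrow> 'b) \<Rightarrow> 'b \<Rightarrow> 'b" where
  "poly_op p A v = (\<Sum>k\<le>degree p. coeff p k *s (A ^^ k) v)"

lemma poly_op_bound: "degree p \<le> D \<Longrightarrow> poly_op p A v = (\<Sum>k\<le>D. coeff p k *s (A ^^ k) v)"
  unfolding poly_op_def by (rule sum.mono_neutral_left) (auto simp: coeff_eq_0)

lemma poly_op_0 [simp]: "poly_op 0 A v = 0"
  by (simp add: poly_op_def)

lemma poly_op_const: "poly_op [:a:] A v = a *s v"
  by (simp add: poly_op_def)

lemma poly_op_pCons: "poly_op (pCons a p) A v = a *s v + poly_op p A (A v)"
proof -
  have "poly_op (pCons a p) A v = (\<Sum>k\<le>Suc (degree p). coeff (pCons a p) k *s (A ^^ k) v)"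
    by (rule poly_op_bound) (simp add: degree_pCons_le)
  also have "\<dots> = a *s v + (\<Sum>k\<le>degree p. coeff p k *s (A ^^ k) (A v))"
    by (subst sum.atMost_Suc_shift) (simp add: funpow_Suc_right del: funpow.simps)
  finally show ?thesis by (simp add: poly_op_def)
qed

lemma poly_op_add: "poly_op (p + q) A v = poly_op p A v + poly_op q A v"
proof -
  let ?D = "max (degree p) (degree q)"
  have "poly_op (p + q) A v = (\<Sum>k\<le>?D. coeff (p + q) k *s (A ^^ k) v)"
    by (rule poly_op_bound) (simp add: degree_add_le)
  also have "\<dots> = (\<Sum>k\<le>?D. coeff p k *s (A ^^ k) v) + (\<Sum>k\<le>?D. coeff q k *s (A ^^ k) v)"
    by (simp add: scale_left_distrib sum.distrib)
  also have "\<dots> = poly_op p A v + poly_op q A v"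
    using poly_op_bound[of p ?D A v] poly_op_bound[of q ?D A v] by simp
  finally show ?thesis .
qed

lemma poly_op_smult: "poly_op (smult c p) A v = c *s poly_op p A v"
  using poly_op_bound[of "smult c p" "degree p" A v] by (simp add: poly_op_def scale_sum_right)

lemma poly_op_diff: "poly_op (p - q) A v = poly_op p A v - poly_op q A v"
proof -
  have "poly_op (- q) A v = - poly_op q A v"
    using poly_op_smult[of "- 1" q A v] by simp
  then show ?thesis
    using poly_op_add[of p "- q" A v] by simp
qed

lemma poly_op_monom: "poly_op (monom a k) A v = a *s (A ^^ k) v"
proof -
  have "poly_op (monom a k) A v = (\<Sum>j\<le>k. coeff (monom a k) j *s (A ^^ j) v)"
    by (rule poly_op_bound) (rule degree_monom_le)
  also have "\<dots> = a *s (A ^^ k) v"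
    by (simp add: if_distrib[of "\<lambda>c. c *s _"] sum.delta cong: if_cong)
  finally show ?thesis .
qed

lemma poly_op_sum: "finite I \<Longrightarrow> poly_op (\<Sum>i\<in>I. p i) A v = (\<Sum>i\<in>I. poly_op (p i) A v)"
  by (induction I rule: finite_induct) (simp_all add: poly_op_add)

lemma linear_poly_op:
  assumes A: "linear_endo A"
  shows "linear_endo (poly_op p A)"
proof (induction p)
  case 0
  have "poly_op 0 A = (\<lambda>v. 0)"
    by (rule ext) (rule poly_op_0)
  then show ?case
    by (simp only: endo.linear_zero)
next
  case (pCons a p)
  have "poly_op (pCons a p) A = (\<lambda>v. a *s v + poly_op p A (A v))"
    by (rule ext) (rule poly_op_pCons)
  moreover have "linear_endo (\<lambda>v. a *s v + poly_op p A (A v))"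
    using linear_endo_comp[OF pCons.IH A] by (rule endo.linear_compose_add[OF linear_scale_self])
  ultimately show ?case
    by (simp only:)
qed

lemma poly_op_commute:
  assumes A: "linear_endo A"
  shows "poly_op p A (A v) = A (poly_op p A v)"
proof (induction p arbitrary: v)
  case 0
  then show ?case by (simp add: endo.linear_0[OF A])
next
  case (pCons b p)
  then show ?case by (simp add: poly_op_pCons endo.linear_add[OF A] endo.linear_scale[OF A])
qed

lemma poly_op_mult: "linear_endo A \<Longrightarrow> poly_op (p * q) A v = poly_op p A (poly_op q A v)"
proof (induction p arbitrary: v)
  case (pCons a p)
  have "poly_op (pCons a p * q) A v = a *s poly_op q A v + A (poly_op (p * q) A v)"
    by (simp add: mult_pCons_left poly_op_add poly_op_smult poly_op_pCons poly_op_commute[OF pCons.prems])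
  then show ?case
    by (simp add: poly_op_pCons poly_op_commute[OF pCons.prems] pCons.IH[OF pCons.prems])
qed simp

lemma poly_op_intertwine:
  assumes A: "linear_endo A" and B: "linear_endo B"
    and BA: "\<And>x. B (A x) = A (B x) - 2 *s B x"
  shows "B (poly_op p A x) = poly_op (pcompose p [:-2, 1:]) A (B x)"
proof (induction p arbitrary: x)
  case 0
  then show ?case by (simp add: endo.linear_0[OF B])
next
  case (pCons a p)
  have "poly_op (pcompose (pCons a p) [:-2, 1:]) A (B x)
      = a *s B x + poly_op [:-2, 1:] A (poly_op (pcompose p [:-2, 1:]) A (B x))"
    unfolding pcompose_pCons poly_op_add poly_op_const poly_op_mult[OF A] ..
  also have "\<dots> = a *s B x + (-2) *s B (poly_op p A x) + A (B (poly_op p A x))"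
    by (simp add: poly_op_pCons poly_op_const pCons.IH add.assoc)
  also have "\<dots> = B (poly_op (pCons a p) A x)"
    by (simp add: poly_op_pCons poly_op_commute[OF A] endo.linear_add[OF B]
        endo.linear_scale[OF B] BA)
  finally show ?case by simp
qed

end

section \<open>Nilpotency of raising operators\<close>

lemma pcompose_shift_eq_imp_degree_0:
  fixes p :: "'a::field_char_0 poly"
  assumes eq: "pcompose p [:c, 1:] = p" and c: "c \<noteq> 0"
  shows "degree p = 0"
proof -
  have "poly p (of_nat k * c) = poly p 0" for k
  proof (induction k)
    case (Suc k)
    have "poly p (of_nat (Suc k) * c) = poly (pcompose p [:c, 1:]) (of_nat k * c)"
      by (simp add: poly_pcompose algebra_simps)
    then show ?case using Suc eq by simp
  qed simp
  then have "range (\<lambda>k. of_nat k * c) \<subseteq> {x. poly (p - [:poly p 0:]) x = 0}"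
    by auto
  moreover have "infinite (range (\<lambda>k::nat. of_nat k * c))"
    using c by (intro range_inj_infinite) (simp add: inj_on_def)
  ultimately have "p - [:poly p 0:] = 0"
    using poly_roots_finite infinite_super by blast
  then show ?thesis
    by (metis degree_pCons_0 eq_iff_diff_eq_0)
qed

lemma degree_diff_pcompose_shift_less:
  fixes p :: "'a::field_char_0 poly"
  assumes "degree p \<noteq> 0" and "c \<noteq> 0"
  shows "p - pcompose p [:c, 1:] \<noteq> 0 \<and> degree (p - pcompose p [:c, 1:]) < degree p"
proof -
  let ?q = "p - pcompose p [:c, 1:]"
  have deg: "degree (pcompose p [:c, 1:]) = degree p"
    by (simp add: degree_pcompose)
  have lead: "lead_coeff (pcompose p [:c, 1:]) = lead_coeff p"
    using lead_coeff_comp[of "[:c, 1:]" p] by simp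
  have "?q \<noteq> 0"
    using pcompose_shift_eq_imp_degree_0[of p c] assms by auto
  moreover have "degree ?q \<le> degree p"
    using deg by (intro degree_diff_le) simp_all
  moreover have "coeff ?q (degree p) = 0"
    using deg lead by simp
  ultimately show ?thesis
    by (metis le_neq_implies_less leading_coeff_0_iff)
qed

locale fd_vector_space_ops = vector_space_ops scale + finite_dimensional_vector_space scale Basis
  for scale :: "'a::field_char_0 \<Rightarrow> 'b::ab_group_add \<Rightarrow> 'b" (infixr \<open>*s\<close> 75) and Basis
begin

text \<open>The step \<open>p \<mapsto> p(x) - p(x - 2)\<close> lowers the degree and preserves the annihilation
  of a space on which \<open>B\<close> is onto, until a nonzero constant annihilates it.\<close>
lemma raising_onto_annihilated_eq_0:
  assumes A: "linear_endo A" and B: "linear_endo B"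
    and BA: "\<And>x. B (A x) = A (B x) - 2 *s B x"
    and onto: "\<And>y. y \<in> S \<Longrightarrow> \<exists>x\<in>S. B x = y"
    and P: "P \<noteq> 0" "\<forall>y\<in>S. poly_op P A y = 0" and y: "y \<in> S"
  shows "y = 0"
  using P y
proof (induction "degree P" arbitrary: P y rule: less_induct)
  case less
  show ?case
  proof (cases "degree P = 0")
    case True
    then have "coeff P 0 \<noteq> 0"
      using less.prems(1) by (metis leading_coeff_0_iff)
    moreover have "poly_op P A y = coeff P 0 *s y"
      using True poly_op_bound[of P 0 A y] by simp
    ultimately show ?thesis using less.prems by auto
  next
    case False
    define Q where "Q = P - pcompose P [:-2, 1:]"
    have Q: "Q \<noteq> 0" "degree Q < degree P"
      unfolding Q_def using degree_diff_pcompose_shift_less[OF False, of "-2"] by auto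
    have "poly_op Q A z = 0" if z: "z \<in> S" for z
    proof -
      obtain x where x: "x \<in> S" "B x = z" using onto[OF z] by blast
      have "poly_op (pcompose P [:-2, 1:]) A z = B (poly_op P A x)"
        using poly_op_intertwine[OF A B BA, of P x] x by simp
      also have "\<dots> = 0" using less.prems(2) x by (simp add: endo.linear_0[OF B])
      finally show ?thesis using less.prems(2) z by (simp add: Q_def poly_op_diff)
    qed
    then show ?thesis using less.hyps[OF Q(2) Q(1)] less.prems(3) by blast
  qed
qed


lemma poly_op_annihilates_vector:
  assumes A: "linear_endo A"
  shows "\<exists>p. p \<noteq> 0 \<and> poly_op p A c = 0"
proof -
  define N where "N = card Basis"
  define f where "f k = (A ^^ k) c" for k
  show ?thesis
  proof (cases "inj_on f {0..N}")
    case False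
    then obtain i j where ij: "i \<in> {0..N}" "j \<in> {0..N}" "i \<noteq> j" "f i = f j"
      unfolding inj_on_def by blast
    define p :: "'a poly" where "p = monom 1 j - monom 1 i"
    have "coeff p j = 1" using ij by (simp add: p_def)
    then have "p \<noteq> 0" by auto
    moreover have "poly_op p A c = 0"
      using ij by (simp add: p_def poly_op_diff poly_op_monom f_def)
    ultimately show ?thesis by blast
  next
    case True
    define X where "X = f ` {0..N}"
    have "card X = N + 1" using True by (simp add: X_def card_image)
    then have "dependent X"
      using independent_card_le_dim[of X UNIV] by (auto simp: N_def)
    then obtain u v where uv: "v \<in> X" "u v \<noteq> 0" "(\<Sum>x\<in>X. u x *s x) = 0"
      using dependent_finite[of X] by (auto simp: X_def)
    define p where "p = (\<Sum>k\<in>{0..N}. monom (u (f k)) k)"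
    obtain k0 where k0: "k0 \<in> {0..N}" "v = f k0" using uv X_def by blast
    have "coeff p k0 = u (f k0)"
      using k0 by (simp add: p_def coeff_sum)
    then have "p \<noteq> 0" using uv k0 by auto
    moreover have "poly_op p A c = (\<Sum>x\<in>X. u x *s x)"
      using sum.reindex[OF True, of "\<lambda>x. u x *s x"]
      by (simp add: p_def poly_op_sum poly_op_monom f_def X_def)
    ultimately show ?thesis using uv by auto
  qed
qed

lemma poly_op_annihilator:
  assumes A: "linear_endo A"
  obtains P where "P \<noteq> 0" "\<And>x. poly_op P A x = 0"
proof -
  define q where "q b = (SOME p. p \<noteq> 0 \<and> poly_op p A b = 0)" for b
  have q: "q b \<noteq> 0 \<and> poly_op (q b) A b = 0" for b
    unfolding q_def by (rule someI_ex) (rule poly_op_annihilates_vector[OF A])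
  define P where "P = (\<Prod>b\<in>Basis. q b)"
  have "poly_op P A b = 0" if "b \<in> Basis" for b
  proof -
    have "P = (\<Prod>b'\<in>Basis - {b}. q b') * q b"
      using prod.remove[OF finite_Basis that, of q] by (simp add: P_def mult.commute)
    then show ?thesis
      using endo.linear_0[OF linear_poly_op[OF A]] by (simp add: poly_op_mult[OF A] q)
  qed
  then have "poly_op P A x = 0" for x
    using endo.linear_eq_0_on_span[OF linear_poly_op[OF A, of P], of Basis x] span_Basis by auto
  moreover have "P \<noteq> 0" using q finite_Basis by (simp add: P_def)
  ultimately show thesis using that by blast
qed

lemma funpow_image_stabilizes:
  assumes B: "linear_endo B" and W: "subspace W" and BW: "B ` W \<subseteq> W"
  obtains k where "(B ^^ Suc k) ` W = (B ^^ k) ` W"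
proof -
  define S where "S k = (B ^^ k) ` W" for k
  have subS: "subspace (S k)" for k
    unfolding S_def by (rule endo.linear_subspace_image[OF linear_endo_funpow[OF B] W])
  have dec: "S (Suc k) \<subseteq> S k" for k
    using BW by (auto simp: S_def funpow_Suc_right simp del: funpow.simps)
  have "\<exists>k. dim (S k) \<le> dim (S (Suc k))"
  proof (rule ccontr)
    assume "\<nexists>k. dim (S k) \<le> dim (S (Suc k))"
    then have lt: "dim (S (Suc k)) < dim (S k)" for k
      by (simp add: not_le)
    have "dim (S k) + k \<le> dim (S 0)" for k
    proof (induction k)
      case (Suc k)
      then show ?case using lt[of k] by simp
    qed simp
    then show False
      using dim_subset_UNIV[of "S 0"] by (metis add_leD2 dimension_def not_less_eq_eq)
  qed
  then obtain k where "dim (S k) \<le> dim (S (Suc k))" by blast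
  then have "S (Suc k) = S k" using subspace_dim_equal[OF subS subS dec] by blast
  then show thesis using that unfolding S_def by blast
qed

lemma raising_nilpotent:
  assumes A: "linear_endo A" and B: "linear_endo B"
    and BA: "\<And>x. B (A x) = A (B x) - 2 *s B x"
    and W: "subspace W" and BW: "B ` W \<subseteq> W"
  obtains r where "\<And>x. x \<in> W \<Longrightarrow> (B ^^ r) x = 0"
proof -
  obtain k where k: "(B ^^ Suc k) ` W = (B ^^ k) ` W"
    using funpow_image_stabilizes[OF B W BW] by blast
  have onto: "\<exists>x\<in>(B ^^ k) ` W. B x = y" if "y \<in> (B ^^ k) ` W" for y
  proof -
    from that k obtain x where "x \<in> W" "y = (B ^^ Suc k) x" by auto
    then show ?thesis by auto
  qed
  obtain P where "P \<noteq> 0" "\<And>x. poly_op P A x = 0"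
    using poly_op_annihilator[OF A] by blast
  then have "y = 0" if "y \<in> (B ^^ k) ` W" for y
    using raising_onto_annihilated_eq_0[OF A B BA onto] that by blast
  then show thesis using that by blast
qed

end


section \<open>Finite dimensional representations of \<open>sl\<^sub>2\<close>\<close>

locale sl2_triple = fd_vector_space_ops scale Basis
  for scale :: "'a::field_char_0 \<Rightarrow> 'b::ab_group_add \<Rightarrow> 'b" (infixr \<open>*s\<close> 75) and Basis +
  fixes F H E :: "'b \<Rightarrow> 'b"
  assumes linear_F: "linear_endo F" and linear_H: "linear_endo H" and linear_E: "linear_endo E"
    and H_E: "\<And>v. H (E v) = E (H v) + 2 *s E v"
    and H_F: "\<And>v. H (F v) = F (H v) - 2 *s F v"
    and E_F: "\<And>v. E (F v) = F (E v) + H v"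
begin

lemma H_funpow_F: "H ((F ^^ k) x) = (F ^^ k) (H x) - (2 * of_nat k) *s (F ^^ k) x"
proof (induction k arbitrary: x)
  case (Suc k)
  have "H ((F ^^ Suc k) x) = F (H ((F ^^ k) x)) - 2 *s F ((F ^^ k) x)"
    by (simp add: H_F)
  also have "\<dots> = F ((F ^^ k) (H x)) - (2 * of_nat k) *s F ((F ^^ k) x) - 2 *s F ((F ^^ k) x)"
    by (simp add: Suc endo.linear_diff[OF linear_F] endo.linear_scale[OF linear_F])
  also have "\<dots> = (F ^^ Suc k) (H x) - (2 * of_nat (Suc k)) *s (F ^^ Suc k) x"
    by (simp add: algebra_simps scale_left_distrib)
  finally show ?case .
qed simp

lemma E_funpow_F:
  assumes "E y = 0"
  shows "E ((F ^^ Suc k) y) = (F ^^ k) (of_nat (Suc k) *s H y - of_nat (Suc k * k) *s y)"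
proof (induction k)
  case 0
  then show ?case by (simp add: E_F assms endo.linear_0[OF linear_F])
next
  case (Suc k)
  have "E ((F ^^ Suc (Suc k)) y) = F (E ((F ^^ Suc k) y)) + H ((F ^^ Suc k) y)"
    by (simp add: E_F)
  also have "\<dots> = (F ^^ Suc k) (of_nat (Suc k) *s H y - of_nat (Suc k * k) *s y)
       + ((F ^^ Suc k) (H y) - (2 * of_nat (Suc k)) *s (F ^^ Suc k) y)"
    by (simp only: Suc H_funpow_F) simp
  also have "\<dots> = (F ^^ Suc k) ((of_nat (Suc k) *s H y - of_nat (Suc k * k) *s y)
       + (H y - (2 * of_nat (Suc k)) *s y))"
    using linear_endo_funpow[OF linear_F, of "Suc k"]
    by (simp only: endo.linear_add endo.linear_diff endo.linear_scale)
  also have "(of_nat (Suc k) *s H y - of_nat (Suc k * k) *s y) + (H y - (2 * of_nat (Suc k)) *s y)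
      = (of_nat (Suc k) *s H y + H y) - (of_nat (Suc k * k) *s y + (2 * of_nat (Suc k)) *s y)"
    by (simp add: algebra_simps)
  also have "\<dots> = (of_nat (Suc k) + 1) *s H y - (of_nat (Suc k * k) + 2 * of_nat (Suc k)) *s y"
    by (simp only: scale_left_distrib scale_one)
  also have "(of_nat (Suc k) + 1 :: 'a) = of_nat (Suc (Suc k))"
    by simp
  also have "(of_nat (Suc k * k) + 2 * of_nat (Suc k) :: 'a) = of_nat (Suc (Suc k) * Suc k)"
    by (simp add: algebra_simps)
  finally show ?case .
qed

primrec falling_H :: "nat \<Rightarrow> 'b \<Rightarrow> 'b" where
  "falling_H 0 y = y"
| "falling_H (Suc k) y = H (falling_H k y) - of_nat k *s falling_H k y"

lemma linear_falling_H: "linear_endo (falling_H k)"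
proof (induction k)
  case 0
  have "falling_H 0 = (\<lambda>x. x)" by (rule ext) simp
  then show ?case by (simp only: linear_ident)
next
  case (Suc k)
  have "falling_H (Suc k) = (\<lambda>x. H (falling_H k x) - of_nat k *s falling_H k x)"
    by (rule ext) simp
  moreover have "linear_endo (\<lambda>x. H (falling_H k x) - of_nat k *s falling_H k x)"
    using linear_endo_comp[OF linear_H Suc] endo.linear_compose_scale_right[OF Suc]
    by (rule endo.linear_compose_sub)
  ultimately show ?case by (simp only:)
qed

lemma falling_H_H: "falling_H k (H y) = H (falling_H k y)"
  by (induction k) (simp_all add: endo.linear_diff[OF linear_H] endo.linear_scale[OF linear_H])

lemma E_H_eq_0: "E y = 0 \<Longrightarrow> E (H y) = 0"
  using H_E[of y] by (simp add: endo.linear_0[OF linear_H])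

lemma E_falling_H: "E y = 0 \<Longrightarrow> E (falling_H k y) = 0"
  by (induction k)
    (simp_all add: E_H_eq_0 endo.linear_diff[OF linear_E] endo.linear_scale[OF linear_E])

lemma funpow_E_funpow_F: "E y = 0 \<Longrightarrow> (E ^^ k) ((F ^^ k) y) = fact k *s falling_H k y"
proof (induction k arbitrary: y)
  case (Suc k)
  define y' where "y' = H y - of_nat k *s y"
  have Ey': "E y' = 0"
    using Suc.prems E_H_eq_0[OF Suc.prems]
    by (simp add: y'_def endo.linear_diff[OF linear_E] endo.linear_scale[OF linear_E])
  have eq: "of_nat (Suc k) *s H y - of_nat (Suc k * k) *s y = of_nat (Suc k) *s y'"
    by (simp add: y'_def scale_right_diff_distrib algebra_simps)
  have "(E ^^ Suc k) ((F ^^ Suc k) y) = (E ^^ k) (E ((F ^^ Suc k) y))"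
    by (simp only: funpow_Suc_right o_apply)
  also have "\<dots> = (E ^^ k) ((F ^^ k) (of_nat (Suc k) *s y'))"
    by (simp only: E_funpow_F[OF Suc.prems] eq)
  also have "\<dots> = of_nat (Suc k) *s (fact k *s falling_H k y')"
    by (simp add: endo.linear_scale[OF linear_endo_funpow[OF linear_E]]
        endo.linear_scale[OF linear_endo_funpow[OF linear_F]] Suc.IH[OF Ey'])
  also have "falling_H k y' = falling_H (Suc k) y"
    by (simp add: y'_def endo.linear_diff[OF linear_falling_H]
        endo.linear_scale[OF linear_falling_H] falling_H_H)
  finally show ?case by (simp add: algebra_simps)
qed simp

lemma highest_weight_vector_exists:
  assumes W: "subspace W" and FW: "F ` W \<subseteq> W" and HW: "H ` W \<subseteq> W" and EW: "E ` W \<subseteq> W"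
    and nz: "W \<noteq> {0}"
  obtains v j where "v \<in> W" "v \<noteq> 0" "E v = 0" "H v = of_nat j *s v"
proof -
  have E_H: "E (H x) = H (E x) - 2 *s E x" for x
    by (simp add: H_E)
  obtain rE where rE: "\<And>x. x \<in> W \<Longrightarrow> (E ^^ rE) x = 0"
    using raising_nilpotent[OF linear_H linear_E E_H W EW] by blast
  have F_minus_H: "F (- H x) = - H (F x) - 2 *s F x" for x
    by (simp add: endo.linear_neg[OF linear_F] H_F)
  obtain rF where rF: "\<And>x. x \<in> W \<Longrightarrow> (F ^^ rF) x = 0"
    using raising_nilpotent[OF endo.linear_compose_neg[OF linear_H] linear_F F_minus_H W FW]
    by blast
  obtain x where x: "x \<in> W" "x \<noteq> 0" using nz subspace_0[OF W] by blast
  obtain k where k: "(E ^^ k) x \<noteq> 0" "(E ^^ Suc k) x = 0"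
    using ex_least_nat_less[of "\<lambda>k. (E ^^ k) x = 0" rE] x rE by auto
  define v0 where "v0 = (E ^^ k) x"
  have v0: "v0 \<in> W" "v0 \<noteq> 0" "E v0 = 0"
    using k x funpow_in_subspace[OF W EW] by (auto simp: v0_def)
  \<comment> \<open>since \<open>E\<^sup>r F\<^sup>r v0 = r! \<cdot> falling_H r v0\<close>, some \<open>falling_H j v0\<close> is a weight vector\<close>
  have "fact rF *s falling_H rF v0 = (E ^^ rF) ((F ^^ rF) v0)"
    using funpow_E_funpow_F[OF v0(3)] by simp
  also have "\<dots> = 0" using rF v0 endo.linear_0[OF linear_endo_funpow[OF linear_E]] by simp
  finally have "falling_H rF v0 = 0" by simp
  then obtain j where j: "falling_H j v0 \<noteq> 0" "falling_H (Suc j) v0 = 0"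
    using ex_least_nat_less[of "\<lambda>j. falling_H j v0 = 0" rF] v0 by auto
  have "falling_H i y \<in> W" if "y \<in> W" for i y
    using that by (induction i)
      (auto intro!: subspace_diff[OF W] subspace_scale[OF W] simp: HW[THEN subsetD])
  then have "falling_H j v0 \<in> W"
    using v0(1) by blast
  then show thesis
    using that[of "falling_H j v0" j] j E_falling_H[OF v0(3)] by auto
qed


definition std_basis :: "'b set \<Rightarrow> nat \<Rightarrow> (nat \<Rightarrow> 'b) \<Rightarrow> bool" where
  "std_basis W n u \<longleftrightarrow>
     inj_on u {..n} \<and> independent (u ` {..n}) \<and> span (u ` {..n}) = W \<and>
     (\<forall>i\<le>n. H (u i) = of_int (int n - 2 * int i) *s u i) \<and>
     (\<forall>i\<le>n. F (u i) = (if i < n then u (i + 1) else 0)) \<and>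
     (\<forall>i\<le>n. E (u i) = (if i = 0 then 0 else of_nat (i * (n - i + 1)) *s u (i - 1)))"

lemma H_funpow_F_eigen:
  "H v = \<mu> *s v \<Longrightarrow> H ((F ^^ i) v) = (\<mu> - 2 * of_nat i) *s (F ^^ i) v"
  using H_funpow_F[of i v]
  by (simp add: endo.linear_scale[OF linear_endo_funpow[OF linear_F]] scale_left_diff_distrib)

lemma E_funpow_F_highest:
  assumes "E v = 0" and "H v = \<mu> *s v"
  shows "E ((F ^^ Suc i) v) = (of_nat (Suc i) * (\<mu> - of_nat i)) *s (F ^^ i) v"
proof -
  have "of_nat (Suc i) *s H v - of_nat (Suc i * i) *s v = (of_nat (Suc i) * (\<mu> - of_nat i)) *s v"
    by (simp add: assms(2) algebra_simps scale_left_diff_distrib)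
  then show ?thesis
    using E_funpow_F[OF assms(1), of i]
    by (simp add: endo.linear_scale[OF linear_endo_funpow[OF linear_F]])
qed

text \<open>The vectors \<open>F\<^sup>i v\<close> are eigenvectors of \<open>H\<close> for distinct eigenvalues, so finite
  dimension forces some \<open>F\<^sup>n\<^sup>+\<^sup>1 v = 0\<close>; then \<open>E F\<^sup>n\<^sup>+\<^sup>1 v = (n + 1)(\<mu> - n) F\<^sup>n v\<close> gives \<open>\<mu> = n\<close>.\<close>
lemma highest_weight_string:
  assumes v: "v \<noteq> 0" "E v = 0" "H v = \<mu> *s v"
  obtains n where "\<mu> = of_nat n" "\<And>i. i \<le> n \<Longrightarrow> (F ^^ i) v \<noteq> 0" "(F ^^ Suc n) v = 0"
proof -
  define u where "u i = (F ^^ i) v" for i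
  have Hu: "H (u i) = (\<mu> - 2 * of_nat i) *s u i" for i
    using H_funpow_F_eigen[OF v(3)] by (simp add: u_def)
  have inj_weight: "inj_on (\<lambda>i. \<mu> - 2 * of_nat i :: 'a) A" for A
    by (auto simp: inj_on_def)
  have "\<exists>r. u r = 0"
  proof (rule ccontr)
    assume "\<nexists>r. u r = 0"
    then have "inj_on u {..dimension}" "independent (u ` {..dimension})"
      using eigenvector_family_independent[OF linear_H _ inj_weight, of dimension u] Hu by auto
    then have "card (u ` {..dimension}) \<le> dimension" "card (u ` {..dimension}) = Suc dimension"
      using independent_card_le_dim[of "u ` {..dimension}" UNIV]
      by (auto simp: card_image dimension_def)
    then show False by simp
  qed
  then obtain r where "u r = 0" by blast
  then obtain n where n: "\<And>i. i \<le> n \<Longrightarrow> u i \<noteq> 0" "u (Suc n) = 0"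
    using ex_least_nat_less[of "\<lambda>i. u i = 0" r] v(1) by (auto simp: u_def)
  have "(of_nat (Suc n) * (\<mu> - of_nat n)) *s u n = 0"
    using E_funpow_F_highest[OF v(2,3), of n] n(2) by (simp add: u_def endo.linear_0[OF linear_E])
  moreover have "(of_nat (Suc n) :: 'a) \<noteq> 0"
    by (rule of_nat_neq_0)
  ultimately have "\<mu> = of_nat n"
    using n(1)[of n] by (simp del: of_nat_Suc)
  then show thesis
    using that n by (simp add: u_def)
qed

lemma std_basis_highest_weight_string:
  assumes v: "E v = 0" "H v = of_nat n *s v"
    and nz: "\<And>i. i \<le> n \<Longrightarrow> (F ^^ i) v \<noteq> 0" and last: "(F ^^ Suc n) v = 0"
  shows "std_basis (span ((\<lambda>i. (F ^^ i) v) ` {..n})) n (\<lambda>i. (F ^^ i) v)"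
proof -
  define u where "u i = (F ^^ i) v" for i
  have Hu: "H (u i) = of_int (int n - 2 * int i) *s u i" for i
    using H_funpow_F_eigen[OF v(2), of i] by (simp add: u_def)
  have "inj_on (\<lambda>i. of_int (int n - 2 * int i) :: 'a) {..n}"
    by (auto simp: inj_on_def)
  then have "inj_on u {..n}" "independent (u ` {..n})"
    using eigenvector_family_independent[OF linear_H, of n u] Hu nz by (auto simp: u_def)
  moreover have "F (u i) = (if i < n then u (i + 1) else 0)" if "i \<le> n" for i
    using that last by (auto simp: u_def)
  moreover have "E (u i) = (if i = 0 then 0 else of_nat (i * (n - i + 1)) *s u (i - 1))"
    if "i \<le> n" for i
  proof (cases i)
    case 0
    then show ?thesis using v(1) by (simp add: u_def)
  next
    case (Suc j)
    then have "j < n" "n - i + 1 = n - j"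
      using that by auto
    then have "(of_nat (Suc j) * (of_nat n - of_nat j) :: 'a) = of_nat (i * (n - i + 1))"
      using Suc by (simp only: of_nat_mult of_nat_diff less_imp_le)
    then show ?thesis
      using E_funpow_F_highest[OF v, of j] Suc by (simp add: u_def)
  qed
  ultimately show ?thesis
    using Hu unfolding std_basis_def u_def by blast
qed

lemma std_basis_invariant:
  assumes basis: "std_basis S n u"
  shows "F ` S \<subseteq> S" "H ` S \<subseteq> S" "E ` S \<subseteq> S"
proof -
  have S: "S = span (u ` {..n})"
    using basis by (simp add: std_basis_def)
  have uS: "u i \<in> S" if "i \<le> n" for i
    using that by (auto simp: S intro: span_base)
  have zS: "0 \<in> S" and scS: "x \<in> S \<Longrightarrow> c *s x \<in> S" for c x
    by (simp_all add: S span_zero span_scale)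
  have invariant: "f ` S \<subseteq> S" if f: "linear_endo f" and fu: "\<And>i. i \<le> n \<Longrightarrow> f (u i) \<in> S" for f
  proof -
    have "f ` S = span (f ` u ` {..n})"
      unfolding S by (rule endo.linear_span_image[OF f, symmetric])
    also have "\<dots> \<subseteq> S"
      using fu by (intro span_minimal) (auto simp: S)
    finally show ?thesis .
  qed
  show "F ` S \<subseteq> S"
    by (rule invariant[OF linear_F]) (use basis uS zS in \<open>auto simp: std_basis_def\<close>)
  show "H ` S \<subseteq> S"
    by (rule invariant[OF linear_H]) (use basis uS scS in \<open>auto simp: std_basis_def\<close>)
  show "E ` S \<subseteq> S"
    by (rule invariant[OF linear_E]) (use basis uS zS scS in \<open>auto simp: std_basis_def\<close>)
qed

lemma irreducible_std_basis_highest_weight: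
  assumes W: "subspace W" and FW: "F ` W \<subseteq> W" and HW: "H ` W \<subseteq> W" and EW: "E ` W \<subseteq> W"
    and irr: "sl2_irreducible scale F H E W"
    and v: "v \<in> W" "v \<noteq> 0" "E v = 0" "H v = \<mu> *s v"
  obtains n where "\<mu> = of_nat n" "std_basis W n (\<lambda>i. (F ^^ i) v)"
proof -
  obtain n where n: "\<mu> = of_nat n" "\<And>i. i \<le> n \<Longrightarrow> (F ^^ i) v \<noteq> 0" "(F ^^ Suc n) v = 0"
    using highest_weight_string[OF v(2-4)] by blast
  define S where "S = span ((\<lambda>i. (F ^^ i) v) ` {..n})"
  have basis: "std_basis S n (\<lambda>i. (F ^^ i) v)"
    unfolding S_def using std_basis_highest_weight_string[of v n] v n by simp
  have "S \<subseteq> W"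
    unfolding S_def using funpow_in_subspace[OF W FW v(1)] by (intro span_minimal[OF _ W]) auto
  moreover have "v \<in> S"
    unfolding S_def by (rule span_base) force
  ultimately have "S = W"
    using irr std_basis_invariant[OF basis] subspace_span v(2)
    unfolding sl2_irreducible_def S_def by blast
  then show thesis
    using that n(1) basis by blast
qed

lemma irreducible_std_basis:
  assumes W: "subspace W" and FW: "F ` W \<subseteq> W" and HW: "H ` W \<subseteq> W" and EW: "E ` W \<subseteq> W"
    and irr: "sl2_irreducible scale F H E W"
  obtains n u where "std_basis W n u"
proof -
  obtain v j where "v \<in> W" "v \<noteq> 0" "E v = 0" "H v = of_nat j *s v"
    using highest_weight_vector_exists[OF W FW HW EW] irr by (auto simp: sl2_irreducible_def)
  then show thesis
    using irreducible_std_basis_highest_weight[OF W FW HW EW irr] that by metis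
qed

lemma std_basis_weight_vector:
  assumes basis: "std_basis W m w" and x: "x \<in> W" "x \<noteq> 0" "H x = \<mu> *s x"
  obtains k c where "k \<le> m" "\<mu> = of_int (int m - 2 * int k)" "x = c *s w k"
proof -
  have inj: "inj_on w {..m}" and ind: "independent (w ` {..m})" and sp: "span (w ` {..m}) = W"
    and Hw: "\<forall>k\<le>m. H (w k) = of_int (int m - 2 * int k) *s w k"
    using basis by (auto simp: std_basis_def)
  obtain c where c: "x = (\<Sum>k\<le>m. c k *s w k)"
    using span_family_sum[OF inj] x(1) sp by blast
  define d where "d k = (of_int (int m - 2 * int k) :: 'a)" for k
  have "H x = (\<Sum>k\<le>m. (c k * d k) *s w k)"
    using Hw by (simp add: c endo.linear_sum[OF linear_H] endo.linear_scale[OF linear_H] d_def)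
  moreover have "\<mu> *s x = (\<Sum>k\<le>m. (c k * \<mu>) *s w k)"
    by (simp add: c scale_sum_right mult.commute)
  ultimately have "(\<Sum>k\<le>m. (c k * d k) *s w k) - (\<Sum>k\<le>m. (c k * \<mu>) *s w k) = 0"
    using x(3) by simp
  then have "(\<Sum>k\<le>m. (c k * (d k - \<mu>)) *s w k) = 0"
    by (simp add: sum_subtractf[symmetric] scale_left_diff_distrib algebra_simps)
  then have z: "c k * (d k - \<mu>) = 0" if "k \<le> m" for k
    using independent_family_coeffs_zero[OF inj ind, of "\<lambda>k. c k * (d k - \<mu>)"] that by blast
  obtain k0 where k0: "k0 \<le> m" "c k0 \<noteq> 0"
    using x(2) c by (metis (no_types, lifting) atMost_iff scale_zero_left sum.neutral)
  have weight: "\<mu> = d k0"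
    using z[OF k0(1)] k0(2) by simp
  have "c k = 0" if "k \<le> m" "k \<noteq> k0" for k
    using z[OF that(1)] that weight by (simp add: d_def)
  then have "x = c k0 *s w k0"
    using c k0(1) by (simp add: sum.remove[of "{..m}" k0] sum.neutral)
  then show thesis
    using that k0 weight d_def by blast
qed

end

section \<open>Alternating binomial convolutions\<close>

text \<open>\<open>zcoef \<beta> j t\<close> will be the coefficient of \<open>w\<^sub>t\<close> in \<open>z\<^sub>j u\<^sub>s\<^sub>+\<^sub>t\<^sub>-\<^sub>j\<close>, where \<open>\<beta> t\<close> is that of
  \<open>z\<^sub>0 u\<^sub>s\<^sub>+\<^sub>t\<close>.\<close>
definition zcoef :: "(nat \<Rightarrow> 'a::field_char_0) \<Rightarrow> nat \<Rightarrow> nat \<Rightarrow> 'a" where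
  "zcoef \<beta> j t = (\<Sum>k = 0..t. (-1) ^ (j - k) * of_nat (j choose k) * \<beta> (t - k))"

lemma zcoef_0: "zcoef \<beta> 0 t = \<beta> t"
proof -
  have "zcoef \<beta> 0 t = (\<Sum>k\<in>{0..t}. if k = 0 then \<beta> t else 0)"
    unfolding zcoef_def by (rule sum.cong) auto
  also have "\<dots> = \<beta> t" by simp
  finally show ?thesis .
qed

lemma zcoef_Suc_0: "zcoef \<beta> (Suc j) 0 = - zcoef \<beta> j 0"
  unfolding zcoef_def by simp

lemma neg_one_power_choose_Suc: "((-1::'a::field_char_0) ^ (j - k) * of_nat (j choose Suc k)) =
   - ((-1) ^ (j - Suc k) * of_nat (j choose Suc k))"
proof (cases "k < j")
  case True
  then have "j - k = Suc (j - Suc k)" by simp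
  then show ?thesis by simp
next
  case False
  then show ?thesis by simp
qed

lemma zcoef_Suc_Suc: "zcoef \<beta> (Suc j) (Suc t) = zcoef \<beta> j t - zcoef \<beta> j (Suc t)"
proof -
  have "zcoef \<beta> (Suc j) (Suc t) = (-1) ^ Suc j * \<beta> (Suc t) +
      (\<Sum>k = 0..t. (-1) ^ (j - k) * (of_nat (j choose k) + of_nat (j choose Suc k)) * \<beta> (t - k))"
    unfolding zcoef_def by (subst sum.atLeast0_atMost_Suc_shift) simp
  also have "\<dots> = (-1) ^ Suc j * \<beta> (Suc t) + zcoef \<beta> j t +
      (\<Sum>k = 0..t. (-1) ^ (j - k) * of_nat (j choose Suc k) * \<beta> (t - k))"
    unfolding zcoef_def by (simp add: algebra_simps sum.distrib)
  also have "(\<Sum>k = 0..t. (-1) ^ (j - k) * of_nat (j choose Suc k) * \<beta> (t - k))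
     = - (\<Sum>k = 0..t. (-1) ^ (j - Suc k) * of_nat (j choose Suc k) * \<beta> (t - k))"
    by (simp add: neg_one_power_choose_Suc sum_negf[symmetric])
  also have "zcoef \<beta> j (Suc t) = (-1) ^ j * \<beta> (Suc t) +
      (\<Sum>k = 0..t. (-1) ^ (j - Suc k) * of_nat (j choose Suc k) * \<beta> (t - k))"
    unfolding zcoef_def by (subst sum.atLeast0_atMost_Suc_shift) simp
  ultimately show ?thesis by simp
qed

lemma zcoef_eq_0:
  assumes "\<And>t'. t' > d \<Longrightarrow> \<beta> t' = 0" and "t > d + j"
  shows "zcoef \<beta> j t = 0"
  unfolding zcoef_def
proof (rule sum.neutral, clarify)
  fix k assume "k \<in> {0..t}"
  show "(-1) ^ (j - k) * of_nat (j choose k) * \<beta> (t - k) = 0"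
  proof (cases "k \<le> j")
    case True then have "t - k > d" using assms(2) by simp
    then show ?thesis using assms(1) by simp
  next
    case False then show ?thesis by simp
  qed
qed

lemma sum_atLeast0_atMost_trunc:
  fixes A B :: nat
  assumes "\<And>k. min A B < k \<Longrightarrow> g k = 0"
  shows "sum g {0..A} = (sum g {0..B} :: 'a::comm_monoid_add)"
proof -
  have "sum g {0..A} = sum g {0..min A B}"
    by (rule sum.mono_neutral_right) (auto simp: assms)
  also have "\<dots> = sum g {0..B}"
    by (rule sum.mono_neutral_left) (auto simp: assms)
  finally show ?thesis .
qed

text \<open>The paper's parameters are \<open>a\<^sub>t = \<beta>\<^sub>t t! m! / (m - t)!\<close>; for \<open>N = 0\<close> this rescaling turns
  \<open>coef1\<close> and \<open>coef2\<close> into \<open>zcoef\<close>.\<close>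
lemma acoef_rescale:
  fixes \<beta> :: "nat \<Rightarrow> 'a::field_char_0"
  assumes t: "t \<le> d" "t \<le> m" and b0: "\<beta> 0 = 1"
  shows "fact (m - t) / (fact t * fact m) *
         acoef (\<lambda>t. \<beta> t * fact t * fact m / fact (m - t)) d (int t) = \<beta> t"
proof (cases "t = 0")
  case True then show ?thesis using b0 by (simp add: acoef_def)
next
  case False
  then have "acoef (\<lambda>t. \<beta> t * fact t * fact m / fact (m - t)) d (int t) = \<beta> t * fact t * fact m / fact (m - t)"
    using t by (simp add: acoef_def)
  then show ?thesis by simp
qed

lemma coef1_eq_zcoef:
  fixes \<beta> :: "nat \<Rightarrow> 'a::field_char_0"
  assumes "\<theta> \<le> n - s" "\<theta> \<le> m" "\<beta> 0 = 1"
  shows "coef1 m n s 0 (\<lambda>t. \<beta> t * fact t * fact m / fact (m - t)) j \<theta> = zcoef \<beta> j \<theta>"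
  unfolding coef1_def zcoef_def
proof (rule sum.cong[OF refl])
  fix k assume k: "k \<in> {0..\<theta>}"
  have e1: "int \<theta> - int k = int (\<theta> - k)" using k by auto
  have e2: "m - 0 - \<theta> + k = m - (\<theta> - k)" using k assms by auto
  have e3: "0 + \<theta> - k = \<theta> - k" by simp
  show "(-1) ^ (j - k) * of_nat (j choose k) * (fact (m - 0 - \<theta> + k) / (fact (0 + \<theta> - k) * fact m)) *
          acoef (\<lambda>t. \<beta> t * fact t * fact m / fact (m - t)) (n - s) (int \<theta> - int k) =
        (-1) ^ (j - k) * of_nat (j choose k) * \<beta> (\<theta> - k)"
  proof -
    have fa: "fact (m - (\<theta> - k)) / (fact (\<theta> - k) * fact m) *
         acoef (\<lambda>t. \<beta> t * fact t * fact m / fact (m - t)) (n - s) (int (\<theta> - k)) = \<beta> (\<theta> - k)"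
      using acoef_rescale[of "\<theta> - k" "n - s" m \<beta>] assms by simp
    show ?thesis unfolding e1 e2 e3 by (subst fa[symmetric]) (simp only: mult.assoc)
  qed
qed

lemma coef2_eq_zcoef:
  fixes \<beta> :: "nat \<Rightarrow> 'a::field_char_0"
  assumes sn: "s \<le> n" and dm: "n - s + \<theta> \<le> m" and b0: "\<beta> 0 = 1"
    and bz: "\<And>t. t > n - s \<Longrightarrow> \<beta> t = 0"
  shows "coef2 m n s 0 (\<lambda>t. \<beta> t * fact t * fact m / fact (m - t)) j \<theta> = zcoef \<beta> j (n - s + \<theta>)"
proof -
  define d where "d = n - s"
  define a where "a = (\<lambda>t. \<beta> t * fact t * fact m / fact (m - t))"
  define g where "g k = (if k \<le> d then (-1) ^ (j - \<theta> - k) * of_nat (j choose (\<theta> + k)) * \<beta> (d - k) else 0)" for k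
  have "coef2 m n s 0 a j \<theta> = (\<Sum>k = 0..j - \<theta>. g k)"
    unfolding coef2_def
  proof (rule sum.cong[OF refl])
    fix k assume k: "k \<in> {0..j - \<theta>}"
    show "(-1) ^ (j - \<theta> - k) * of_nat (j choose (\<theta> + k)) *
          (fact (m + s + k - 0 - n) / (fact (0 + n - s - k) * fact m)) *
          acoef a (n - s) (int n - int s - int k) = g k"
    proof (cases "k \<le> d")
      case True
      have e1: "int n - int s - int k = int (d - k)" using True sn by (auto simp: d_def)
      have e2: "m + s + k - 0 - n = m - (d - k)" using True sn dm by (auto simp: d_def)
      have e3: "0 + n - s - k = d - k" by (simp add: d_def)
      have fa: "fact (m - (d - k)) / (fact (d - k) * fact m) * acoef a (n - s) (int (d - k)) = \<beta> (d - k)"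
        using acoef_rescale[of "d - k" d m \<beta>] True dm b0 by (simp add: a_def d_def)
      show ?thesis
        unfolding e1 e2 e3 g_def using True by (subst fa[symmetric]) (simp only: if_True mult.assoc)
    next
      case False
      then have "int n - int s - int k < 0" using sn by (auto simp: d_def)
      then show ?thesis using False by (simp add: acoef_def g_def)
    qed
  qed
  also have "\<dots> = (\<Sum>k = 0..d. g k)"
  proof (rule sum_atLeast0_atMost_trunc)
    fix k assume "min (j - \<theta>) d < k"
    then show "g k = 0" by (auto simp: g_def)
  qed
  also have "\<dots> = zcoef \<beta> j (d + \<theta>)"
  proof -
    define h where "h k' = (-1) ^ (j - k') * of_nat (j choose k') * \<beta> (d + \<theta> - k')" for k'
    have "zcoef \<beta> j (d + \<theta>) = sum h {0..d + \<theta>}" by (simp add: zcoef_def h_def)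
    also have "\<dots> = sum h {0 + \<theta>..d + \<theta>}"
      by (rule sum.mono_neutral_right) (auto simp: h_def bz d_def)
    also have "\<dots> = (\<Sum>k = 0..d. h (k + \<theta>))" by (rule sum.shift_bounds_cl_nat_ivl)
    also have "\<dots> = (\<Sum>k = 0..d. g k)"
      by (rule sum.cong) (auto simp: h_def g_def add.commute diff_diff_eq)
    finally show ?thesis by simp
  qed
  finally show ?thesis by (simp add: a_def d_def)
qed

section \<open>2-irreducible triangular modules\<close>

locale sl2L_2irr_module = sl2_triple scale Basis F H E
  for scale :: "'a::field_char_0 \<Rightarrow> 'b::ab_group_add \<Rightarrow> 'b" (infixr \<open>*s\<close> 75)
    and Basis F H E +
  fixes L :: nat and Z :: "nat \<Rightarrow> 'b \<Rightarrow> 'b" and V0 V1 :: "'b set"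
  assumes linear_Z: "\<And>j. j \<le> L \<Longrightarrow> linear_endo (Z j)"
    and Z_Suc: "\<And>j x. j < L \<Longrightarrow> Z (Suc j) x = F (Z j x) - Z j (F x)"
    and E_Z0: "\<And>x. E (Z 0 x) = Z 0 (E x)"
    and H_Z0: "\<And>x. H (Z 0 x) = Z 0 (H x) + of_nat L *s Z 0 x"
    and subspace_V0: "subspace V0" and subspace_V1: "subspace V1"
    and V0_plus_V1: "\<And>v. \<exists>x\<in>V0. \<exists>y\<in>V1. v = x + y"
    and invariant_V0: "F ` V0 \<subseteq> V0" "H ` V0 \<subseteq> V0" "E ` V0 \<subseteq> V0"
    and invariant_V1: "F ` V1 \<subseteq> V1" "H ` V1 \<subseteq> V1" "E ` V1 \<subseteq> V1"
    and Z_V0: "\<And>j x. j \<le> L \<Longrightarrow> x \<in> V0 \<Longrightarrow> Z j x \<in> V1"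
    and Z_V1: "\<And>j y. j \<le> L \<Longrightarrow> y \<in> V1 \<Longrightarrow> Z j y = 0"
    and irreducible_V0: "sl2_irreducible scale F H E V0"
    and irreducible_V1: "sl2_irreducible scale F H E V1"
    and Z_nonzero: "\<exists>j\<le>L. \<exists>v. Z j v \<noteq> 0"
begin

context
  fixes n u
  assumes basis_V0: "std_basis V0 n u"
begin

lemma u_in_V0: "i \<le> n \<Longrightarrow> u i \<in> V0"
  using basis_V0 by (auto simp: std_basis_def intro!: span_base)

lemma F_u: "i \<le> n \<Longrightarrow> F (u i) = (if i < n then u (i + 1) else 0)"
  and H_u: "i \<le> n \<Longrightarrow> H (u i) = of_int (int n - 2 * int i) *s u i"
  and E_u: "i \<le> n \<Longrightarrow> E (u i) = (if i = 0 then 0 else of_nat (i * (n - i + 1)) *s u (i - 1))"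
  using basis_V0 by (simp_all add: std_basis_def)

text \<open>Since \<open>z\<^sub>j\<^sub>+\<^sub>1 = [f, z\<^sub>j]\<close>, the whole radical acts by zero on \<open>V0\<close> as soon as \<open>z\<^sub>0\<close> does.\<close>
lemma Z0_u_nonzero: "\<exists>i\<le>n. Z 0 (u i) \<noteq> 0"
proof (rule ccontr)
  assume "\<not> (\<exists>i\<le>n. Z 0 (u i) \<noteq> 0)"
  then have "\<forall>i\<le>n. Z j (u i) = 0" if "j \<le> L" for j
    using that
  proof (induction j)
    case (Suc j)
    then show ?case
      using Z_Suc[of j] F_u endo.linear_0[OF linear_F] endo.linear_0[OF linear_Z[of j]]
      by (auto simp: Suc_le_eq)
  qed simp
  moreover obtain j v where jv: "j \<le> L" "Z j v \<noteq> 0"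
    using Z_nonzero by blast
  moreover obtain x y where xy: "x \<in> V0" "y \<in> V1" "v = x + y"
    using V0_plus_V1 by blast
  ultimately have "Z j x = 0"
    using endo.linear_eq_0_on_span[OF linear_Z[OF jv(1)], of "u ` {..n}" x] basis_V0
    by (auto simp: std_basis_def)
  then show False
    using jv xy Z_V1[OF jv(1) xy(2)] endo.linear_add[OF linear_Z[OF jv(1)]] by simp
qed

lemma H_Z0_u: "i \<le> n \<Longrightarrow> H (Z 0 (u i)) = of_int (int n - 2 * int i + int L) *s Z 0 (u i)"
  using H_Z0[of "u i"] H_u[of i]
  by (simp add: endo.linear_scale[OF linear_Z[of 0]] scale_left_distrib)

context
  fixes s
  assumes s: "s \<le> n" "Z 0 (u s) \<noteq> 0" and below_s: "\<And>i. i < s \<Longrightarrow> Z 0 (u i) = 0"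
begin

lemma E_Z0_u_s: "E (Z 0 (u s)) = 0"
proof (cases s)
  case 0
  then show ?thesis
    using E_u s(1) E_Z0 endo.linear_0[OF linear_Z[of 0]] by simp
next
  case (Suc s')
  then show ?thesis
    using E_u s(1) E_Z0 below_s[of s'] endo.linear_scale[OF linear_Z[of 0]] by simp
qed

text \<open>As \<open>[e, z\<^sub>0] = 0\<close>, \<open>z\<^sub>0 u\<^sub>s\<close> is a highest weight vector of \<open>V1\<close>; taking it as \<open>w\<^sub>0\<close> is why
  the model found always has \<open>N = 0\<close>.\<close>
lemma std_basis_V1:
  obtains m w where "std_basis V1 m w" "w 0 = Z 0 (u s)" "m + 2 * s = L + n"
proof -
  obtain m where m: "(of_int (int n - 2 * int s + int L) :: 'a) = of_nat m"
    and basis: "std_basis V1 m (\<lambda>k. (F ^^ k) (Z 0 (u s)))"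
    using irreducible_std_basis_highest_weight[OF subspace_V1 invariant_V1 irreducible_V1
        Z_V0[OF _ u_in_V0] s(2) E_Z0_u_s H_Z0_u] s(1) by blast
  have "int n - 2 * int s + int L = int m"
    using m by (metis of_int_eq_iff of_int_of_nat_eq)
  then show thesis
    using that[OF basis] by simp
qed

context
  fixes m w
  assumes basis_V1: "std_basis V1 m w" and w0: "w 0 = Z 0 (u s)"
    and m: "m + 2 * s = L + n"
begin

lemma Z0_u_in_line:
  assumes i: "s \<le> i" "i \<le> n" and nz: "Z 0 (u i) \<noteq> 0"
  shows "i - s \<le> m" "\<exists>c. Z 0 (u i) = c *s w (i - s)"
proof -
  have "int n - 2 * int i + int L = int m - 2 * int (i - s)"
    using m i(1) by (simp add: of_nat_diff)
  then have "H (Z 0 (u i)) = of_int (int m - 2 * int (i - s)) *s Z 0 (u i)"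
    using H_Z0_u[OF i(2)] by simp
  then obtain k c where "k \<le> m" "(of_int (int m - 2 * int (i - s)) :: 'a) = of_int (int m - 2 * int k)"
    "Z 0 (u i) = c *s w k"
    using std_basis_weight_vector[OF basis_V1 Z_V0[OF _ u_in_V0[OF i(2)]] nz] by blast
  moreover from this have "k = i - s"
    by simp
  ultimately show "i - s \<le> m" "\<exists>c. Z 0 (u i) = c *s w (i - s)"
    by auto
qed

lemma Z0_u_coefficients:
  obtains \<beta> where "\<beta> 0 = 1" "\<And>t. n - s < t \<Longrightarrow> \<beta> t = 0"
    "\<And>i. s \<le> i \<Longrightarrow> i \<le> n \<Longrightarrow> Z 0 (u i) = (if i - s \<le> m then \<beta> (i - s) *s w (i - s) else 0)"
proof -
  define \<beta> where "\<beta> t = (if t \<le> n - s \<and> t \<le> m then (SOME c. Z 0 (u (s + t)) = c *s w t) else 0)"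
    for t
  have line: "\<exists>c. Z 0 (u i) = c *s w (i - s)" if "s \<le> i" "i \<le> n" for i
    using Z0_u_in_line[OF that] by (cases "Z 0 (u i) = 0") (auto intro: exI[of _ 0])
  have Z0_u: "Z 0 (u i) = (if i - s \<le> m then \<beta> (i - s) *s w (i - s) else 0)"
    if i: "s \<le> i" "i \<le> n" for i
  proof (cases "i - s \<le> m")
    case True
    moreover have "i - s \<le> n - s"
      using i by simp
    ultimately show ?thesis
      using someI_ex[OF line[OF i]] i by (simp add: \<beta>_def)
  next
    case False
    then show ?thesis
      using Z0_u_in_line(1)[OF i] by auto
  qed
  have "Z 0 (u s) = \<beta> 0 *s w 0"
    using Z0_u[of s] s(1) by simp
  then have "\<beta> 0 *s w 0 = 1 *s w 0"
    using w0 by (metis scale_one)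
  moreover have "w 0 \<noteq> 0"
    using w0 s(2) by simp
  ultimately have "\<beta> 0 = 1"
    by (simp add: scale_right_imp_eq)
  moreover have "\<beta> t = 0" if "n - s < t" for t
    using that by (simp add: \<beta>_def)
  ultimately show thesis
    using that Z0_u by blast
qed

context
  fixes \<beta>
  assumes \<beta>0: "\<beta> 0 = 1" and \<beta>_high: "\<And>t. n - s < t \<Longrightarrow> \<beta> t = 0"
    and Z0_u: "\<And>i. s \<le> i \<Longrightarrow> i \<le> n \<Longrightarrow> Z 0 (u i) = (if i - s \<le> m then \<beta> (i - s) *s w (i - s) else 0)"
begin

definition Z_model :: "nat \<Rightarrow> nat \<Rightarrow> 'b" where
  "Z_model j i =
     (if s \<le> i + j \<and> i + j - s \<le> m then zcoef \<beta> j (i + j - s) *s w (i + j - s) else 0)"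

lemma F_w: "k \<le> m \<Longrightarrow> F (w k) = (if k < m then w (k + 1) else 0)"
  using basis_V1 by (simp add: std_basis_def)

lemma F_Z_model:
  "F (Z_model j i) =
     (if s \<le> i + j \<and> i + j - s < m then zcoef \<beta> j (i + j - s) *s w (Suc (i + j - s)) else 0)"
  using F_w by (auto simp: Z_model_def endo.linear_scale[OF linear_F] endo.linear_0[OF linear_F])

text \<open>The recursion \<open>z\<^sub>j\<^sub>+\<^sub>1 u\<^sub>i = f (z\<^sub>j u\<^sub>i) - z\<^sub>j u\<^sub>i\<^sub>+\<^sub>1\<close> is the Pascal-type recursion of \<open>zcoef\<close>.\<close>
lemma Z_model_Suc:
  assumes i: "i \<le> n"
  shows "F (Z_model j i) - (if i < n then Z_model j (Suc i) else 0) = Z_model (Suc j) i"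
proof -
  consider (below) "i + Suc j < s" | (first) "i + Suc j = s" | (above) "s \<le> i + j"
    by linarith
  then show ?thesis
  proof cases
    case below
    then show ?thesis by (simp only: F_Z_model) (simp add: Z_model_def)
  next
    case first
    then have "i < n" using s(1) by simp
    then show ?thesis using first by (simp only: F_Z_model) (simp add: Z_model_def zcoef_Suc_0)
  next
    case above
    define t where "t = i + j - s"
    have t: "i + Suc j - s = Suc t" "Suc i + j - s = Suc t"
      using above by (auto simp: t_def)
    show ?thesis
    proof (cases "Suc t \<le> m")
      case True
      show ?thesis
      proof (cases "i < n")
        case True
        then show ?thesis using above \<open>Suc t \<le> m\<close> t
          by (simp only: F_Z_model)
            (simp add: Z_model_def zcoef_Suc_Suc t_def[symmetric] scale_left_diff_distrib)
      next
        case False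
        then have "zcoef \<beta> j (Suc t) = 0"
          using i s(1) \<beta>_high by (intro zcoef_eq_0[of "n - s"]) (auto simp: t_def)
        then show ?thesis using above \<open>Suc t \<le> m\<close> t False zcoef_Suc_Suc[of \<beta> j t]
          by (simp only: F_Z_model) (simp add: Z_model_def t_def[symmetric])
      qed
    next
      case False
      then show ?thesis using above t
        by (simp only: F_Z_model) (auto simp: Z_model_def t_def[symmetric])
    qed
  qed
qed

lemma Z_u: "j \<le> L \<Longrightarrow> i \<le> n \<Longrightarrow> Z j (u i) = Z_model j i"
proof (induction j arbitrary: i)
  case 0
  then show ?case
    using Z0_u[of i] below_s[of i] by (cases "s \<le> i") (simp_all add: Z_model_def zcoef_0)
next
  case (Suc j)
  have "Z j (F (u i)) = (if i < n then Z_model j (Suc i) else 0)"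
    using Suc F_u endo.linear_0[OF linear_Z[of j]] by auto
  then show ?case
    using Z_Suc[of j "u i"] Suc Z_model_Suc by simp
qed

lemma model_basis:
  "is_model_basis scale L F H E Z V0 V1 m n s 0 (\<lambda>t. \<beta> t * fact t * fact m / fact (m - t)) u w"
proof -
  have "Z j (w k) = 0" if "j \<le> L" "k \<le> m" for j k
    using that basis_V1 Z_V1 by (auto simp: std_basis_def intro!: span_base)
  moreover have "Z j (u i) = 0" if "j \<le> L" "i \<le> n" "i + j < s" for i j
    using that by (simp add: Z_u Z_model_def)
  moreover have
    "Z j (u (s + \<theta> - j)) = (if \<theta> + 0 \<le> m
       then coef1 m n s 0 (\<lambda>t. \<beta> t * fact t * fact m / fact (m - t)) j \<theta> *s w (\<theta> + 0) else 0)"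
    if "\<theta> \<le> n - s" "j \<le> min (s + \<theta>) L" for \<theta> j
    using that s(1) \<beta>0 by (simp add: Z_u Z_model_def coef1_eq_zcoef)
  moreover have
    "Z j (u (n + \<theta> - j)) = (if n - s + \<theta> + 0 \<le> m
       then coef2 m n s 0 (\<lambda>t. \<beta> t * fact t * fact m / fact (m - t)) j \<theta> *s w (n - s + \<theta> + 0)
       else 0)"
    if "1 \<le> \<theta>" "\<theta> \<le> j" "j \<le> L" "j \<le> n + \<theta>" for \<theta> j
    using that s(1) \<beta>0 \<beta>_high by (simp add: Z_u Z_model_def coef2_eq_zcoef)
  ultimately show ?thesis
    using basis_V0 basis_V1 unfolding is_model_basis_def std_basis_def by blast
qed

end

end

end

end

lemma model_basis_exists:
  "\<exists>m n s N a u w. m + 2 * s = L + n + 2 * N \<and> s \<le> n \<and> N \<le> m \<and>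
     is_model_basis scale L F H E Z V0 V1 m n s N a u w"
proof -
  obtain n u where basis_V0: "std_basis V0 n u"
    using irreducible_std_basis[OF subspace_V0 invariant_V0 irreducible_V0] by blast
  obtain i where "i \<le> n \<and> Z 0 (u i) \<noteq> 0"
    using Z0_u_nonzero[OF basis_V0] by blast
  then obtain s where s: "s \<le> n" "Z 0 (u s) \<noteq> 0" "\<And>i. i < s \<Longrightarrow> Z 0 (u i) = 0"
    using ex_least_nat_le[of "\<lambda>i. i \<le> n \<and> Z 0 (u i) \<noteq> 0" i] by force
  obtain m w where w: "std_basis V1 m w" "w 0 = Z 0 (u s)" "m + 2 * s = L + n"
    using std_basis_V1[OF basis_V0 s] by blast
  obtain \<beta> where \<beta>: "\<beta> 0 = 1" "\<And>t. n - s < t \<Longrightarrow> \<beta> t = 0"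
    "\<And>i. s \<le> i \<Longrightarrow> i \<le> n \<Longrightarrow> Z 0 (u i) = (if i - s \<le> m then \<beta> (i - s) *s w (i - s) else 0)"
    using Z0_u_coefficients[OF basis_V0 s w] by blast
  have "m + 2 * s = L + n + 2 * 0" "s \<le> n" "0 \<le> m"
    using w(3) s(1) by simp_all
  then show ?thesis
    using model_basis[OF basis_V0 s w \<beta>] by blast
qed

end

lemma finite_dimensional_vector_space_exists:
  assumes "vector_space scale" and "finite B" and "module.span scale B = UNIV"
  obtains Basis where "finite_dimensional_vector_space scale Basis"
proof -
  interpret vector_space scale by fact
  obtain Basis where Basis: "independent Basis" "UNIV \<subseteq> span Basis"
    using basis_exists[of UNIV] by blast
  then have "finite Basis"
    using independent_span_bound[OF assms(2) Basis(1)] assms(3) by auto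
  then show thesis
    using that Basis by (simp add: finite_dimensional_vector_space_def
        finite_dimensional_vector_space_axioms_def vector_space_axioms top.extremum_unique)
qed

lemma sl2L_2irr_module_if_triangular_2irr_module:
  fixes scale :: "'a::field_char_0 \<Rightarrow> 'v::ab_group_add \<Rightarrow> 'v"
  assumes M: "triangular_2irr_module scale L F H E Z V0 V1"
    and fd: "finite_dimensional_vector_space scale Basis"
    and Z_nonzero: "\<exists>j\<le>L. \<exists>v. Z j v \<noteq> 0"
  shows "sl2L_2irr_module scale Basis F H E L Z V0 V1"
proof -
  have fd_ops: "fd_vector_space_ops scale Basis"
    by (rule fd_vector_space_ops.intro)
      (simp_all add: fd vector_space_ops_def finite_dimensional_vector_space.axioms(1)[OF fd])
  interpret fd_vector_space_ops scale Basis
    by (fact fd_ops)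
  note rep = M[unfolded triangular_2irr_module_def, THEN conjunct1, unfolded sl2L_rep_def]
  note module = M[unfolded triangular_2irr_module_def, THEN conjunct2]
  have "sl2_triple_axioms scale F H E"
  proof (rule sl2_triple_axioms.intro)
    show "linear_endo F" "linear_endo H" "linear_endo E"
      using rep by blast+
    have "H (E v) - E (H v) = scale 2 (E v)" for v
      using rep by (elim conjE) blast
    then show "H (E v) = E (H v) + scale 2 (E v)" for v
      by (simp add: diff_eq_eq add.commute)
    have "H (F v) - F (H v) = scale (- 2) (F v)" for v
      using rep by (elim conjE) blast
    then show "H (F v) = F (H v) - scale 2 (F v)" for v
      by (simp add: algebra_simps)
    have "E (F v) - F (E v) = H v" for v
      using rep by (elim conjE) blast
    then show "E (F v) = F (E v) + H v" for v
      by (simp add: diff_eq_eq add.commute)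
  qed
  moreover have "sl2L_2irr_module_axioms scale F H E L Z V0 V1"
  proof (rule sl2L_2irr_module_axioms.intro)
    have "\<forall>j\<le>L. linear_endo (Z j)"
      using rep by (elim conjE)
    then show "linear_endo (Z j)" if "j \<le> L" for j
      using that by blast
    have "\<forall>j\<le>L. \<forall>v. F (Z j v) - Z j (F v) = zext L Z (j + 1) v"
      using rep by (elim conjE)
    then show "Z (Suc j) x = F (Z j x) - Z j (F x)" if "j < L" for j x
      using that by (simp add: zext_def eq_diff_eq)
    have "\<forall>j\<le>L. \<forall>v. E (Z j v) - Z j (E v) =
        (if j = 0 then 0 else scale (of_nat (j * (L - j + 1))) (zext L Z (j - 1) v))"
      using rep by (elim conjE)
    then have "E (Z 0 x) - Z 0 (E x) = 0" for x
      by simp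
    then show "E (Z 0 x) = Z 0 (E x)" for x
      by simp
    have "\<forall>j\<le>L. \<forall>v. H (Z j v) - Z j (H v) = scale (of_int (int L - 2 * int j)) (Z j v)"
      using rep by (elim conjE)
    then have "H (Z 0 x) - Z 0 (H x) = scale (of_nat L) (Z 0 x)" for x
      by simp
    then show "H (Z 0 x) = Z 0 (H x) + scale (of_nat L) (Z 0 x)" for x
      by (simp add: diff_eq_eq add.commute)
    show "subspace V0" "subspace V1" "\<And>v. \<exists>x\<in>V0. \<exists>y\<in>V1. v = x + y"
      "F ` V0 \<subseteq> V0" "H ` V0 \<subseteq> V0" "E ` V0 \<subseteq> V0" "F ` V1 \<subseteq> V1" "H ` V1 \<subseteq> V1" "E ` V1 \<subseteq> V1"
      "sl2_irreducible scale F H E V0" "sl2_irreducible scale F H E V1"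
      using module by simp_all
    have "\<forall>j\<le>L. Z j ` V0 \<subseteq> V1 \<and> Z j ` V1 \<subseteq> {0}"
      using module by (elim conjE)
    then show "Z j x \<in> V1" if "j \<le> L" "x \<in> V0" for j x
      using that by blast
    show "Z j y = 0" if "j \<le> L" "y \<in> V1" for j y
      using \<open>\<forall>j\<le>L. Z j ` V0 \<subseteq> V1 \<and> Z j ` V1 \<subseteq> {0}\<close> that by blast
  qed (fact Z_nonzero)
  ultimately show ?thesis
    using fd_ops by (intro sl2L_2irr_module.intro sl2_triple.intro)
qed

theorem proposition0p5:
  fixes scale :: "'a::field_char_0 \<Rightarrow> 'v::ab_group_add \<Rightarrow> 'v"
    and L :: nat
    and F H E :: "'v \<Rightarrow> 'v"
    and Z :: "nat \<Rightarrow> 'v \<Rightarrow> 'v"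
    and V0 V1 :: "'v set"
  assumes "L \<ge> 1"
    and "triangular_2irr_module scale L F H E Z V0 V1"
    and "\<exists>j\<le>L. \<exists>v. Z j v \<noteq> 0"
  shows "\<exists>m n s N a u w. m + 2 * s = L + n + 2 * N \<and> s \<le> n \<and> N \<le> m \<and>
           is_model_basis scale L F H E Z V0 V1 m n s N a u w"
proof -
  have "vector_space scale"
    using assms(2) unfolding triangular_2irr_module_def sl2L_rep_def by (elim conjE)
  moreover have "\<exists>B. finite B \<and> module.span scale B = UNIV"
    using assms(2) unfolding triangular_2irr_module_def by (elim conjE)
  ultimately obtain Basis where "finite_dimensional_vector_space scale Basis"
    using finite_dimensional_vector_space_exists by blast
  then have "sl2L_2irr_module scale Basis F H E L Z V0 V1"
    using sl2L_2irr_module_if_triangular_2irr_module assms(2,3) by blast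
  then show ?thesis
    by (rule sl2L_2irr_module.model_basis_exists)
qed

end
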